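(* Let $I\subset\mathbb{R}$ be an interval, let $a,b,c,d,f,g,h:I\to\mathbb{R}$ be given functions with $a(t)\neq0$ on $I$, and let $y\in\mathbb{R}$ be a parameter. Suppose $\mu>0,\alpha,\beta,\gamma,\delta,\varepsilon,\kappa_1,\kappa_2$ are differentiable functions on $I$ satisfying the modified Riccati system $$\alpha'+b=2c\alpha+4a\alpha^2,\quad \beta'=(c+4a\alpha)\beta,\quad \gamma'=a\beta^2,\quad \delta'+2\alpha g=(c+4a\alpha)\delta+f,$$ $$\varepsilon'=(2a\delta-g)\beta,\quad \kappa_1'=a\delta^2-g\delta+he^{\kappa_2},\quad \kappa_2'=-he^{\kappa_2},$$ together with $\alpha=-\dfrac{\mu'}{4a\mu}-\dfrac{d}{2a}$. Then $$\psi(x,t)=\frac{1}{\sqrt{\mu(t)}}e^{\alpha x^2+\beta xy+\gamma y^2+\delta x+\varepsilon y+\kappa_1},\qquad \varphi(x,t)=\frac{1}{\sqrt{\mu(t)}}e^{\alpha x^2+\beta xy+\gamma y^2+\delta x+\varepsilon y+\kappa_1+\kappa_2}$$ (with all coefficient functions evaluated at $t$) solve the system $$\psi_t=a(t)\psi_{xx}-(b(t)x^2-d(t)-xf(t))\psi-(g(t)-c(t)x)\psi_x+h(t)\varphi,$$ $$\varphi_t=a(t)\varphi_{xx}-(b(t)x^2-d(t)-xf(t))\varphi-(g(t)-c(t)x)\varphi_x.$$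
   Context: All functions are real-valued; primes denote derivatives with respect to $t$. *)

theory Defs
  imports "HOL-Analysis.Analysis"
begin

end

theory Submission
  imports Defs
begin

(* For the Gaussian ansatz psi = mu^(-1/2) e^S, with S quadratic in x, one has
   psi_x = S_x psi, psi_xx = (S_x^2 + 2 alpha) psi and psi_t = (S_t - mu'/(2 mu)) psi.
   The constraint on alpha turns -mu'/(2 mu) into 2 a alpha + d, and after division by psi
   the equation becomes a polynomial identity in x and y whose coefficients of
   x^2, xy, y^2, x, y, 1 are exactly the Riccati equations.  Since phi = e^kappa2 psi, the
   extra term kappa2' = -h e^kappa2 of phi_t cancels the source term h phi. *)

lemma gaussian_derivatives:
  fixes F :: "real \<Rightarrow> real" and K p q r x :: real
  assumes F: "\<And>s. F s = K * exp (p * s\<^sup>2 + q * s + r)"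
  shows "F differentiable (at x)"
    and "deriv F differentiable (at x)"
    and "deriv F x = F x * (2 * p * x + q)"
    and "deriv (deriv F) x = F x * ((2 * p * x + q)\<^sup>2 + 2 * p)"
proof -
  have dF: "(F has_real_derivative F s * (2 * p * s + q)) (at s)" for s
    unfolding F[abs_def] by (rule derivative_eq_intros refl)+ (simp add: algebra_simps)
  then have DF: "deriv F = (\<lambda>s. F s * (2 * p * s + q))"
    using DERIV_imp_deriv by blast
  have ddF: "(deriv F has_real_derivative F s * ((2 * p * s + q)\<^sup>2 + 2 * p)) (at s)" for s
    unfolding DF by (rule derivative_eq_intros dF refl)+ (simp add: algebra_simps power2_eq_square)
  show "F differentiable (at x)" "deriv F differentiable (at x)"
    using dF ddF real_differentiable_def by blast+
  show "deriv F x = F x * (2 * p * x + q)" by (simp add: DF)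
  show "deriv (deriv F) x = F x * ((2 * p * x + q)\<^sup>2 + 2 * p)"
    using ddF DERIV_imp_deriv by blast
qed

lemma has_real_derivative_exp_div_sqrt:
  fixes \<mu> E :: "real \<Rightarrow> real"
  assumes "\<mu> t > 0"
    and "(\<mu> has_real_derivative \<mu>') (at t within S)"
    and "(E has_real_derivative E') (at t within S)"
  shows "((\<lambda>s. 1 / sqrt (\<mu> s) * exp (E s)) has_real_derivative
           1 / sqrt (\<mu> t) * exp (E t) * (E' - \<mu>' / (2 * \<mu> t))) (at t within S)"
  using assms
  by (auto intro!: derivative_eq_intros simp: field_simps)

lemma riccati_balance:
  fixes a b c d f g h \<alpha> \<beta> \<gamma> \<delta> \<alpha>' \<beta>' \<gamma>' \<delta>' \<epsilon>' \<kappa>1' k x y :: real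
  assumes "\<alpha>' + b = 2 * c * \<alpha> + 4 * a * \<alpha>\<^sup>2"
    and "\<beta>' = (c + 4 * a * \<alpha>) * \<beta>"
    and "\<gamma>' = a * \<beta>\<^sup>2"
    and "\<delta>' + 2 * \<alpha> * g = (c + 4 * a * \<alpha>) * \<delta> + f"
    and "\<epsilon>' = (2 * a * \<delta> - g) * \<beta>"
    and "\<kappa>1' = a * \<delta>\<^sup>2 - g * \<delta> + h * k"
  shows "\<alpha>' * x\<^sup>2 + \<beta>' * x * y + \<gamma>' * y\<^sup>2 + \<delta>' * x + \<epsilon>' * y + \<kappa>1' + (2 * a * \<alpha> + d)
       = a * ((2 * \<alpha> * x + \<beta> * y + \<delta>)\<^sup>2 + 2 * \<alpha>) - (b * x\<^sup>2 - d - x * f)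
         - (g - c * x) * (2 * \<alpha> * x + \<beta> * y + \<delta>) + h * k"
proof -
  have alpha'_eq: "\<alpha>' = 2 * c * \<alpha> + 4 * a * \<alpha>\<^sup>2 - b"
    and delta'_eq: "\<delta>' = (c + 4 * a * \<alpha>) * \<delta> + f - 2 * \<alpha> * g"
    using assms(1,4) by linarith+
  show ?thesis
    unfolding alpha'_eq delta'_eq assms(2,3,5,6) by (simp add: algebra_simps power2_eq_square)
qed

theorem theorem2:
  fixes I :: "real set"
    and a b c d f g h :: "real \<Rightarrow> real"
    and y :: real
    and \<mu> \<alpha> \<beta> \<gamma> \<delta> \<epsilon> \<kappa>1 \<kappa>2 :: "real \<Rightarrow> real"
    and \<mu>' \<alpha>' \<beta>' \<gamma>' \<delta>' \<epsilon>' \<kappa>1' \<kappa>2' :: "real \<Rightarrow> real"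
    and \<psi> \<phi> :: "real \<Rightarrow> real \<Rightarrow> real"
  assumes I: "is_interval I"
    and a_nz: "\<And>t. t \<in> I \<Longrightarrow> a t \<noteq> 0"
    and mu_pos: "\<And>t. t \<in> I \<Longrightarrow> \<mu> t > 0"
    and d_mu: "\<And>t. t \<in> I \<Longrightarrow> (\<mu> has_real_derivative \<mu>' t) (at t within I)"
    and d_alpha: "\<And>t. t \<in> I \<Longrightarrow> (\<alpha> has_real_derivative \<alpha>' t) (at t within I)"
    and d_beta: "\<And>t. t \<in> I \<Longrightarrow> (\<beta> has_real_derivative \<beta>' t) (at t within I)"
    and d_gamma: "\<And>t. t \<in> I \<Longrightarrow> (\<gamma> has_real_derivative \<gamma>' t) (at t within I)"
    and d_delta: "\<And>t. t \<in> I \<Longrightarrow> (\<delta> has_real_derivative \<delta>' t) (at t within I)"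
    and d_eps: "\<And>t. t \<in> I \<Longrightarrow> (\<epsilon> has_real_derivative \<epsilon>' t) (at t within I)"
    and d_k1: "\<And>t. t \<in> I \<Longrightarrow> (\<kappa>1 has_real_derivative \<kappa>1' t) (at t within I)"
    and d_k2: "\<And>t. t \<in> I \<Longrightarrow> (\<kappa>2 has_real_derivative \<kappa>2' t) (at t within I)"
    and R1: "\<And>t. t \<in> I \<Longrightarrow> \<alpha>' t + b t = 2 * c t * \<alpha> t + 4 * a t * (\<alpha> t)\<^sup>2"
    and R2: "\<And>t. t \<in> I \<Longrightarrow> \<beta>' t = (c t + 4 * a t * \<alpha> t) * \<beta> t"
    and R3: "\<And>t. t \<in> I \<Longrightarrow> \<gamma>' t = a t * (\<beta> t)\<^sup>2"
    and R4: "\<And>t. t \<in> I \<Longrightarrow> \<delta>' t + 2 * \<alpha> t * g t = (c t + 4 * a t * \<alpha> t) * \<delta> t + f t"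
    and R5: "\<And>t. t \<in> I \<Longrightarrow> \<epsilon>' t = (2 * a t * \<delta> t - g t) * \<beta> t"
    and R6: "\<And>t. t \<in> I \<Longrightarrow> \<kappa>1' t = a t * (\<delta> t)\<^sup>2 - g t * \<delta> t + h t * exp (\<kappa>2 t)"
    and R7: "\<And>t. t \<in> I \<Longrightarrow> \<kappa>2' t = - h t * exp (\<kappa>2 t)"
    and alpha_mu: "\<And>t. t \<in> I \<Longrightarrow> \<alpha> t = - \<mu>' t / (4 * a t * \<mu> t) - d t / (2 * a t)"
    and psi_def: "\<And>x t. \<psi> x t = 1 / sqrt (\<mu> t) *
        exp (\<alpha> t * x\<^sup>2 + \<beta> t * x * y + \<gamma> t * y\<^sup>2 + \<delta> t * x + \<epsilon> t * y + \<kappa>1 t)"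
    and phi_def: "\<And>x t. \<phi> x t = 1 / sqrt (\<mu> t) *
        exp (\<alpha> t * x\<^sup>2 + \<beta> t * x * y + \<gamma> t * y\<^sup>2 + \<delta> t * x + \<epsilon> t * y + \<kappa>1 t + \<kappa>2 t)"
  shows "\<forall>t\<in>I. \<forall>x.
      (\<lambda>s. \<psi> s t) differentiable (at x) \<and>
      (\<lambda>s. deriv (\<lambda>z. \<psi> z t) s) differentiable (at x) \<and>
      (\<lambda>s. \<phi> s t) differentiable (at x) \<and>
      (\<lambda>s. deriv (\<lambda>z. \<phi> z t) s) differentiable (at x) \<and>
      ((\<lambda>s. \<psi> x s) has_real_derivative
         (a t * deriv (\<lambda>s. deriv (\<lambda>z. \<psi> z t) s) x
          - (b t * x\<^sup>2 - d t - x * f t) * \<psi> x t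
          - (g t - c t * x) * deriv (\<lambda>z. \<psi> z t) x
          + h t * \<phi> x t)) (at t within I) \<and>
      ((\<lambda>s. \<phi> x s) has_real_derivative
         (a t * deriv (\<lambda>s. deriv (\<lambda>z. \<phi> z t) s) x
          - (b t * x\<^sup>2 - d t - x * f t) * \<phi> x t
          - (g t - c t * x) * deriv (\<lambda>z. \<phi> z t) x)) (at t within I)"
proof (intro ballI allI, goal_cases)
  case (1 t x)
  note t = \<open>t \<in> I\<close>
  define S\<^sub>x where "S\<^sub>x = 2 * \<alpha> t * x + \<beta> t * y + \<delta> t"
  define S\<^sub>t where "S\<^sub>t = \<alpha>' t * x\<^sup>2 + \<beta>' t * x * y + \<gamma>' t * y\<^sup>2 + \<delta>' t * x + \<epsilon>' t * y + \<kappa>1' t"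
  have psi_x: "\<psi> s t = 1 / sqrt (\<mu> t) *
      exp (\<alpha> t * s\<^sup>2 + (\<beta> t * y + \<delta> t) * s + (\<gamma> t * y\<^sup>2 + \<epsilon> t * y + \<kappa>1 t))" for s
    by (simp add: psi_def algebra_simps)
  have phi_x: "\<phi> s t = 1 / sqrt (\<mu> t) *
      exp (\<alpha> t * s\<^sup>2 + (\<beta> t * y + \<delta> t) * s + (\<gamma> t * y\<^sup>2 + \<epsilon> t * y + \<kappa>1 t + \<kappa>2 t))" for s
    by (simp add: phi_def algebra_simps)
  have S\<^sub>x_eq: "2 * \<alpha> t * x + (\<beta> t * y + \<delta> t) = S\<^sub>x"
    by (simp add: S\<^sub>x_def)
  note psi_xx = gaussian_derivatives[OF psi_x, of x, unfolded S\<^sub>x_eq]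
  note phi_xx = gaussian_derivatives[OF phi_x, of x, unfolded S\<^sub>x_eq]
  have exponent_t: "((\<lambda>s. \<alpha> s * x\<^sup>2 + \<beta> s * x * y + \<gamma> s * y\<^sup>2 + \<delta> s * x + \<epsilon> s * y + \<kappa>1 s)
      has_real_derivative S\<^sub>t) (at t within I)"
    unfolding S\<^sub>t_def
    by (rule derivative_eq_intros d_alpha[OF t] d_beta[OF t] d_gamma[OF t] d_delta[OF t]
          d_eps[OF t] d_k1[OF t] refl)+ (simp add: algebra_simps)
  have psi_t: "((\<lambda>s. \<psi> x s) has_real_derivative \<psi> x t * (S\<^sub>t - \<mu>' t / (2 * \<mu> t))) (at t within I)"
    unfolding psi_def by (rule has_real_derivative_exp_div_sqrt[OF mu_pos[OF t] d_mu[OF t] exponent_t])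
  have phi_t: "((\<lambda>s. \<phi> x s) has_real_derivative
      \<phi> x t * (S\<^sub>t - \<mu>' t / (2 * \<mu> t) + \<kappa>2' t)) (at t within I)"
    using has_real_derivative_exp_div_sqrt
        [OF mu_pos[OF t] d_mu[OF t] DERIV_add[OF exponent_t d_k2[OF t]]]
    unfolding phi_def by (simp add: algebra_simps)
  have mu_ratio: "- \<mu>' t / (2 * \<mu> t) = 2 * a t * \<alpha> t + d t"
    using alpha_mu[OF t] mu_pos[OF t] a_nz[OF t] by (simp add: field_simps)
  have balance: "S\<^sub>t - \<mu>' t / (2 * \<mu> t) = a t * (S\<^sub>x\<^sup>2 + 2 * \<alpha> t) - (b t * x\<^sup>2 - d t - x * f t)
      - (g t - c t * x) * S\<^sub>x + h t * exp (\<kappa>2 t)"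
    using riccati_balance[OF R1 R2 R3 R4 R5 R6, OF t t t t t t, of x y "d t"] mu_ratio
    unfolding S\<^sub>t_def S\<^sub>x_def by linarith
  have phi_psi: "\<phi> x t = \<psi> x t * exp (\<kappa>2 t)"
    by (simp add: phi_def psi_def exp_add)
  show ?case
    unfolding psi_xx(3,4) phi_xx(3,4)
    by (intro conjI psi_xx(1,2) phi_xx(1,2)
        DERIV_cong[OF psi_t[unfolded balance]] DERIV_cong[OF phi_t[unfolded balance R7[OF t]]])
      (simp_all add: phi_psi algebra_simps)
qed

end
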